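(* Let $n\geqslant 3$, $-1<\alpha<\infty$, and let $\{\mathscr{D}_t\}_{t=1}^N$ be the collection of dyadic systems described in the context. There exists a constant $C_4=C_4(n,\alpha)$ such that for every $1\leqslant t\leqslant N$ and every cube $Q\in\mathscr{D}_t$, \[ |\widehat{Q}|_\alpha\leqslant C_4\,|\widehat{Q}\setminus\widehat{Q}_{1/2}|_\alpha. \]
   Context: $\nu$ is Lebesgue measure on the unit ball $\mathbb{B}_n\subset\mathbb{R}^n$ normalized with $\nu(\mathbb{B}_n)=1$, $d\nu_\alpha(z)=c_\alpha(1-|z|^2)^\alpha d\nu(z)$ with $\nu_\alpha(\mathbb{B}_n)=1$, $|E|_\alpha=\nu_\alpha(E)$. On $\partial\mathbb{B}_n$ let $\rho(x,y)=\arccos\langle x,y\rangle$, $B_\rho(x,r)=\{y\in\partial\mathbb{B}_n:\rho(x,y)<r\}$, $\mathrm{diam}_\rho(Q)=\sup\{\rho(x,y):x,y\in Q\}$. A dyadic system on $(\partial\mathbb{B}_n,\rho)$ is a collection $\{Q_{k,i}: k\geqslant1,\ 1\leqslant i\leqslant M(k)\}$ of subsets such that for each $k$ the $Q_{k,i}$ are pairwise disjoint and cover $\partial\mathbb{B}_n$, and for $k\leqslant l$ either $Q_{l,j}\subset Q_{k,i}$ or $Q_{l,j}\cap Q_{k,i}=\emptyset$; it is associated to $(\eta,\kappa_0,\kappa_1)$ if there are points $x_{k,i}$ with $B_\rho(x_{k,i},\kappa_0\eta^k)\subset Q_{k,i}\subset B_\rho(x_{k,i},\kappa_1\eta^k)$.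 $\{\mathscr{D}_t\}_{t=1}^N$ is a finite collection of dyadic systems each associated to $(1/96,1/12,4)$, such that for every ball $B_\rho\subset\partial\mathbb{B}_n$ there exist $t$ and $Q\in\mathscr{D}_t$ with $B_\rho\subset Q$ and $\mathrm{diam}_\rho(Q)\leqslant C_3\mathrm{diam}_\rho(B_\rho)$, with $N,C_3$ depending only on $n$. For a cube $Q$ and $0<\varepsilon\leqslant1$, $\widehat{Q}_\varepsilon=\{z\in\mathbb{B}_n:z/|z|\in Q,\ 1-\tfrac{\varepsilon}{2}\mathrm{diam}_\rho(Q)<|z|<1\}$ and $\widehat Q=\widehat Q_1$. *)

theory Defs
  imports "HOL-Analysis.Analysis"
begin

definition nu_measure :: "(real^'n::finite) measure" where
  "nu_measure = density (restrict_space lebesgue (ball 0 1))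
      (\<lambda>z. ennreal (1 / measure lebesgue (ball (0::real^'n) 1)))"

definition c_alpha :: "real \<Rightarrow> 'n::finite itself \<Rightarrow> real" where
  "c_alpha \<alpha> TYPE('n) = 1 / (\<integral>z. (1 - norm (z::real^'n)^2) powr \<alpha> \<partial>nu_measure)"

definition nu_alpha_measure :: "real \<Rightarrow> (real^'n::finite) measure" where
  "nu_alpha_measure \<alpha> = density nu_measure
      (\<lambda>z. ennreal (c_alpha \<alpha> TYPE('n) * (1 - norm z ^ 2) powr \<alpha>))"

definition nu_alpha :: "real \<Rightarrow> (real^'n::finite) set \<Rightarrow> real" where
  "nu_alpha \<alpha> E = measure (nu_alpha_measure \<alpha>) E"

definition rho :: "real^'n::finite \<Rightarrow> real^'n \<Rightarrow> real" where
  "rho x y = arccos (x \<bullet> y)"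

definition ball_rho :: "real^'n::finite \<Rightarrow> real \<Rightarrow> (real^'n) set" where
  "ball_rho x r = {y \<in> sphere 0 1. rho x y < r}"

definition diam_rho :: "(real^'n::finite) set \<Rightarrow> real" where
  "diam_rho Q = Sup {rho x y | x y. x \<in> Q \<and> y \<in> Q}"

definition dyadic_system :: "(nat \<Rightarrow> nat) \<Rightarrow> (nat \<Rightarrow> nat \<Rightarrow> (real^'n::finite) set) \<Rightarrow> bool" where
  "dyadic_system M D \<longleftrightarrow>
     (\<forall>k\<ge>1. (\<forall>i\<in>{1..M k}. \<forall>j\<in>{1..M k}. i \<noteq> j \<longrightarrow> D k i \<inter> D k j = {})
            \<and> (\<Union>i\<in>{1..M k}. D k i) = sphere 0 1) \<and>
     (\<forall>k l i j. 1 \<le> k \<and> k \<le> l \<and> i \<in> {1..M k} \<and> j \<in> {1..M l} \<longrightarrow>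
        D l j \<subseteq> D k i \<or> D l j \<inter> D k i = {})"

definition dyadic_associated :: "(nat \<Rightarrow> nat) \<Rightarrow> (nat \<Rightarrow> nat \<Rightarrow> (real^'n::finite) set)
    \<Rightarrow> real \<Rightarrow> real \<Rightarrow> real \<Rightarrow> bool" where
  "dyadic_associated M D \<eta> \<kappa>0 \<kappa>1 \<longleftrightarrow>
     (\<forall>k\<ge>1. \<forall>i\<in>{1..M k}. \<exists>x\<in>sphere 0 1.
        ball_rho x (\<kappa>0 * \<eta>^k) \<subseteq> D k i \<and> D k i \<subseteq> ball_rho x (\<kappa>1 * \<eta>^k))"

definition cubes :: "(nat \<Rightarrow> nat) \<Rightarrow> (nat \<Rightarrow> nat \<Rightarrow> (real^'n::finite) set) \<Rightarrow> (real^'n) set set" where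
  "cubes M D = {D k i | k i. 1 \<le> k \<and> i \<in> {1..M k}}"

definition tent :: "(real^'n::finite) set \<Rightarrow> real \<Rightarrow> (real^'n) set" where
  "tent Q \<epsilon> = {z \<in> ball 0 1. (1 / norm z) *\<^sub>R z \<in> Q \<and>
                  1 - \<epsilon> / 2 * diam_rho Q < norm z \<and> norm z < 1}"

end

theory Submission
  imports Defs
begin

text \<open>Put \<open>u = diam_rho Q / 4\<close>. Over the cone \<open>{z. sgn z \<in> Q}\<close>, \<open>tent Q 1\<close> is the
  region \<open>1 - 2u < |z| < 1\<close> and \<open>tent Q 1 - tent Q (1/2)\<close> is \<open>1 - 2u < |z| \<le> 1 - u\<close>.
  By scaling, the Lebesgue measure of the cone shell \<open>s \<le> |z| < r\<close> is \<open>r^n - s^n\<close> times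
  that of the cone inside the unit ball, and on a shell whose distance to the sphere varies by
  at most a factor two the weight \<open>(1 - |z|^2) powr \<alpha>\<close> is constant up to a factor
  \<open>4 powr |\<alpha>|\<close>. Cutting the outer layer \<open>1 - u \<le> |z| < 1\<close> into dyadic shells bounds its
  \<open>\<nu>\<^sub>\<alpha>\<close>-measure by a geometric series of ratio \<open>2 powr -(1 + \<alpha>)\<close>, i.e. by
  \<open>O(u powr (1 + \<alpha>))\<close> since \<open>\<alpha> > -1\<close>, while the single shell \<open>1 - 9u/8 \<le> |z| < 1 - u\<close>
  inside \<open>tent Q 1 - tent Q (1/2)\<close> has measure at least a constant times \<open>u powr (1 + \<alpha>)\<close>;
  here \<open>u \<le> pi/4\<close> keeps its inner radius away from \<open>0\<close>.\<close>

lemma powr_bounds_between: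
  fixes u x m \<alpha> :: real
  assumes u: "0 < u" and m: "1 \<le> m" and x: "u \<le> x" "x \<le> m * u"
  shows "m powr - \<bar>\<alpha>\<bar> * u powr \<alpha> \<le> x powr \<alpha>"
    and "x powr \<alpha> \<le> m powr \<bar>\<alpha>\<bar> * u powr \<alpha>"
proof -
  have mu: "(m * u) powr \<alpha> = m powr \<alpha> * u powr \<alpha>"
    using u m by (simp add: powr_mult)
  have "m powr - \<bar>\<alpha>\<bar> * u powr \<alpha> \<le> x powr \<alpha> \<and> x powr \<alpha> \<le> m powr \<bar>\<alpha>\<bar> * u powr \<alpha>"
  proof (cases "0 \<le> \<alpha>")
    case True
    have "m powr - \<alpha> \<le> 1"
      using m True by (simp add: powr_minus_divide ge_one_powr_ge_zero)
    then have "m powr - \<alpha> * u powr \<alpha> \<le> u powr \<alpha>"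
      by (simp add: mult_left_le_one_le)
    moreover have "u powr \<alpha> \<le> x powr \<alpha>" "x powr \<alpha> \<le> (m * u) powr \<alpha>"
      using True u x by (auto intro: powr_mono2)
    ultimately show ?thesis
      using True mu by auto
  next
    case False
    have "1 \<le> m powr - \<alpha>"
      using m False by (intro ge_one_powr_ge_zero) auto
    then have "u powr \<alpha> \<le> m powr - \<alpha> * u powr \<alpha>"
      using mult_right_mono[of 1 "m powr - \<alpha>" "u powr \<alpha>"] by simp
    moreover have "(m * u) powr \<alpha> \<le> x powr \<alpha>" "x powr \<alpha> \<le> u powr \<alpha>"
      using False u x by (auto intro: powr_mono2')
    ultimately show ?thesis
      using False mu by auto
  qed
  then show "m powr - \<bar>\<alpha>\<bar> * u powr \<alpha> \<le> x powr \<alpha>" "x powr \<alpha> \<le> m powr \<bar>\<alpha>\<bar> * u powr \<alpha>"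
    by auto
qed

lemma power_diff_le_mult_diff:
  fixes s r :: real
  assumes "0 \<le> s" "s \<le> r" "r \<le> 1"
  shows "r ^ n - s ^ n \<le> real n * (r - s)"
proof (induction n)
  case (Suc n)
  have "r ^ Suc n - s ^ Suc n = r * (r ^ n - s ^ n) + s ^ n * (r - s)"
    by (simp add: algebra_simps)
  also have "\<dots> \<le> 1 * (r ^ n - s ^ n) + 1 * (r - s)"
    using assms by (intro add_mono mult_right_mono) (auto simp: power_mono power_le_one)
  also have "\<dots> \<le> real (Suc n) * (r - s)"
    using Suc by (simp add: algebra_simps)
  finally show ?case .
qed simp

lemma mult_power_le_power_diff:
  fixes s r :: real
  assumes "0 \<le> s" "s \<le> r" "1 \<le> n"
  shows "(r - s) * s ^ (n - 1) \<le> r ^ n - s ^ n"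
proof -
  obtain k where n: "n = Suc k"
    using assms(3) by (cases n) auto
  have "s ^ k \<le> r ^ k"
    using assms by (simp add: power_mono)
  then have "r * s ^ k \<le> r * r ^ k"
    using assms by (simp add: mult_left_mono)
  then show ?thesis
    using n by (simp add: algebra_simps)
qed

lemma ex_dyadic_scale:
  fixes x u :: real
  assumes "0 < x" "x \<le> u"
  shows "\<exists>j. u / 2 ^ Suc j < x \<and> x \<le> u / 2 ^ j"
proof -
  define j where "j = nat \<lfloor>log 2 (u / x)\<rfloor>"
  have "0 \<le> log 2 (u / x)"
    using assms by simp
  then have "\<lfloor>log 2 (u / x)\<rfloor> = int j"
    by (simp add: j_def)
  then have "2 ^ j \<le> u / x \<and> u / x < 2 ^ Suc j"
    using floor_log_eq_powr_iff[of "u / x" 2 "int j"] assms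
    by (simp add: powr_realpow powr_add)
  then show ?thesis
    using assms by (auto simp: field_simps)
qed

lemma dyadic_powr:
  fixes u a :: real
  shows "(u / 2 ^ Suc j) powr a = (u / 2) powr a * (2 powr - a) ^ j"
proof -
  have "(u / 2 ^ Suc j) powr a = ((u / 2) / 2 ^ j) powr a"
    by simp
  also have "\<dots> = (u / 2) powr a / (2 ^ j) powr a"
    by (rule powr_divide)
  also have "(2 ^ j) powr a = (2 powr a) ^ j"
    by (simp add: powr_realpow[symmetric] powr_powr mult.commute)
  also have "(2 powr a) ^ j = inverse ((2 powr - a) ^ j)"
    by (simp add: powr_minus power_inverse)
  finally show ?thesis
    by (simp only: divide_inverse inverse_inverse_eq)
qed

lemma sets_lebesgue_borel: "A \<in> sets borel \<Longrightarrow> A \<in> sets lebesgue"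
  using sets_completionI_sets[of A lborel] by simp

lemma sets_lebesgue_scaleR_image:
  fixes S :: "'a::euclidean_space set"
  assumes "S \<in> sets lebesgue" "t \<noteq> 0"
  shows "(*\<^sub>R) t ` S \<in> sets lebesgue"
proof -
  have "(*\<^sub>R) t ` S = (*\<^sub>R) (1 / t) -` S \<inter> space lebesgue"
    using assms(2) by (force simp: image_iff)
  then show ?thesis
    using measurable_sets[OF lebesgue_measurable_scaling assms(1)] by simp
qed

lemma measure_le_mult_measure:
  assumes le: "emeasure M A \<le> ennreal c * emeasure M B"
    and "B \<subseteq> A" "A \<in> sets M" "0 \<le> c"
  shows "measure M A \<le> c * measure M B"
proof (cases "emeasure M A = \<infinity>")
  case True
  then show ?thesis
    using assms by (simp add: measure_def)
next
  case False
  then have "emeasure M B \<noteq> \<infinity>"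
    using emeasure_mono[OF assms(2,3)] by (auto simp: top_unique)
  then have "enn2real (emeasure M A) \<le> enn2real (ennreal c * emeasure M B)"
    using le by (intro enn2real_mono) (auto simp: ennreal_mult_less_top less_top)
  then show ?thesis
    using assms(4) by (simp add: measure_def enn2real_mult)
qed

definition cone_shell :: "'a::real_normed_vector set \<Rightarrow> real \<Rightarrow> real \<Rightarrow> 'a set" where
  "cone_shell Q s r = {z. sgn z \<in> Q \<and> s \<le> norm z \<and> norm z < r}"

lemma scaleR_image_cone_shell:
  fixes Q :: "'a::real_normed_vector set"
  assumes "0 < t"
  shows "(*\<^sub>R) t ` cone_shell Q s r = cone_shell Q (t * s) (t * r)"
proof
  have "sgn (t *\<^sub>R x) = sgn x" for x :: 'a
    using assms by (simp add: sgn_scaleR)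
  then show "(*\<^sub>R) t ` cone_shell Q s r \<subseteq> cone_shell Q (t * s) (t * r)"
    using assms by (auto simp: cone_shell_def)
  show "cone_shell Q (t * s) (t * r) \<subseteq> (*\<^sub>R) t ` cone_shell Q s r"
  proof
    fix z assume z: "z \<in> cone_shell Q (t * s) (t * r)"
    have "sgn ((1 / t) *\<^sub>R z) = sgn z"
      using assms by (simp add: sgn_scaleR)
    then have "(1 / t) *\<^sub>R z \<in> cone_shell Q s r"
      using z assms by (simp add: cone_shell_def field_simps)
    moreover have "z = t *\<^sub>R ((1 / t) *\<^sub>R z)"
      using assms by simp
    ultimately show "z \<in> (*\<^sub>R) t ` cone_shell Q s r"
      by blast
  qed
qed

text \<open>Rational dilates of the shell exhaust the punctured cone.\<close>
lemma sets_lebesgue_cone_shell_0_1: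
  fixes Q :: "'a::euclidean_space set"
  assumes s: "0 < s" "s < 1" and shell: "cone_shell Q s 1 \<in> sets lebesgue"
  shows "cone_shell Q 0 1 \<in> sets lebesgue"
proof -
  let ?U = "\<Union>q\<in>\<rat> \<inter> {0<..1}. (*\<^sub>R) q ` cone_shell Q s 1"
  have "z \<in> ?U" if z: "z \<in> cone_shell Q 0 1" "z \<noteq> 0" for z
  proof -
    have "norm z < min 1 (norm z / s)"
      using z s by (auto simp: cone_shell_def field_simps)
    then obtain q where q: "q \<in> \<rat>" "norm z < q" "q < min 1 (norm z / s)"
      using Rats_dense_in_real by blast
    then have "q > 0"
      using norm_ge_zero[of z] by linarith
    then have "z \<in> cone_shell Q (q * s) (q * 1)"
      using z(1) q s by (auto simp: cone_shell_def field_simps)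
    then have "z \<in> (*\<^sub>R) q ` cone_shell Q s 1"
      using \<open>q > 0\<close> by (simp add: scaleR_image_cone_shell)
    then show ?thesis
      using q \<open>q > 0\<close> by auto
  qed
  moreover have "(*\<^sub>R) q ` cone_shell Q s 1 \<subseteq> cone_shell Q 0 1" if "0 < q" "q \<le> 1" for q
    using that s by (simp add: scaleR_image_cone_shell) (auto simp: cone_shell_def)
  then have "?U \<subseteq> cone_shell Q 0 1"
    by (simp add: UN_subset_iff)
  ultimately have "cone_shell Q 0 1 = ?U \<union> (cone_shell Q 0 1 \<inter> {0})"
    by blast
  moreover have "?U \<in> sets lebesgue"
    using countable_rat shell by (intro sets.countable_UN'') (auto intro: sets_lebesgue_scaleR_image)
  moreover have "cone_shell Q 0 1 \<inter> {0} \<in> sets lebesgue"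
    by (intro negligible_imp_sets negligible_finite) auto
  ultimately show ?thesis
    by (metis sets.Un)
qed

lemma
  fixes Q :: "'a::euclidean_space set"
  assumes "cone_shell Q 0 1 \<in> sets lebesgue" "0 \<le> s" "s \<le> r"
  shows sets_lebesgue_cone_shell: "cone_shell Q s r \<in> sets lebesgue"
    and measure_cone_shell:
      "measure lebesgue (cone_shell Q s r) = (r ^ DIM('a) - s ^ DIM('a)) * measure lebesgue (cone_shell Q 0 1)"
proof -
  have solid: "cone_shell Q 0 t \<in> lmeasurable \<and>
      measure lebesgue (cone_shell Q 0 t) = t ^ DIM('a) * measure lebesgue (cone_shell Q 0 1)"
    if "0 \<le> t" for t
  proof (cases "t = 0")
    case True
    then show ?thesis
      by (simp add: cone_shell_def)
  next
    case False
    then have eq: "cone_shell Q 0 t = (\<lambda>x. t *\<^sub>R x + 0) ` cone_shell Q 0 1"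
      using that by (simp add: scaleR_image_cone_shell)
    have "bounded (cone_shell Q 0 t)"
      by (rule bounded_subset[OF bounded_ball[of 0 t]]) (auto simp: cone_shell_def)
    then show ?thesis
      using False that assms(1) unfolding eq measure_lebesgue_affine
      by (auto intro!: bounded_set_imp_lmeasurable sets_lebesgue_scaleR_image simp del: image_add_0)
  qed
  have diff: "cone_shell Q s r = cone_shell Q 0 r - cone_shell Q 0 s"
    by (auto simp: cone_shell_def)
  have sub: "cone_shell Q 0 s \<subseteq> cone_shell Q 0 r"
    using assms by (auto simp: cone_shell_def)
  show "cone_shell Q s r \<in> sets lebesgue"
    unfolding diff using solid assms by (intro sets.Diff fmeasurableD) auto
  show "measure lebesgue (cone_shell Q s r) = (r ^ DIM('a) - s ^ DIM('a)) * measure lebesgue (cone_shell Q 0 1)"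
    unfolding diff using solid[of r] solid[of s] assms sub
    by (simp add: measurable_measure_Diff fmeasurableD left_diff_distrib)
qed

lemma sets_nu_alpha_measure:
  "A \<in> sets (nu_alpha_measure \<alpha>) \<longleftrightarrow> A \<in> sets lebesgue \<and> A \<subseteq> ball 0 1"
  by (auto simp: nu_measure_def nu_alpha_measure_def sets_restrict_space_iff)

lemma emeasure_nu_measure:
  fixes A :: "(real^'n::finite) set"
  assumes A: "A \<in> sets lebesgue" "A \<subseteq> ball 0 1"
  shows "emeasure nu_measure A = ennreal (measure lebesgue A / measure lebesgue (ball (0::real^'n) 1))"
proof -
  let ?V = "measure lebesgue (ball (0::real^'n) 1)"
  have AR: "A \<in> sets (restrict_space lebesgue (ball 0 1))"
    using A by (simp add: sets_restrict_space_iff)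
  have "A \<in> lmeasurable"
    using A by (meson bounded_ball bounded_set_imp_lmeasurable bounded_subset)
  then have "emeasure (restrict_space lebesgue (ball 0 1)) A = ennreal (measure lebesgue A)"
    using A by (simp add: emeasure_restrict_space emeasure_eq_measure2)
  then show ?thesis
    unfolding nu_measure_def using AR
    by (simp add: emeasure_density nn_integral_cmult_indicator ennreal_mult'[symmetric])
qed

lemma c_alpha_nonneg: "0 \<le> c_alpha \<alpha> TYPE('n::finite)"
  unfolding c_alpha_def by (simp add: integral_nonneg)

lemma emeasure_nu_alpha_measure:
  fixes A :: "(real^'n::finite) set"
  assumes "A \<in> sets nu_measure"
  shows "emeasure (nu_alpha_measure \<alpha>) A =
    (\<integral>\<^sup>+ z. ennreal (c_alpha \<alpha> TYPE('n) * (1 - norm z ^ 2) powr \<alpha>) * indicator A z \<partial>nu_measure)"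
proof -
  have "(\<lambda>z::real^'n. ennreal (c_alpha \<alpha> TYPE('n) * (1 - norm z ^ 2) powr \<alpha>)) \<in> borel_measurable lebesgue"
    by (rule measurable_completion) measurable
  then show ?thesis
    unfolding nu_alpha_measure_def using assms
    by (subst emeasure_density) (auto simp: nu_measure_def intro: measurable_restrict_space1)
qed

lemma
  fixes A :: "(real^'n::finite) set"
  assumes A: "A \<in> sets lebesgue" "A \<subseteq> ball 0 1"
  shows emeasure_nu_alpha_ge:
      "(\<And>z. z \<in> A \<Longrightarrow> L \<le> (1 - norm z ^ 2) powr \<alpha>) \<Longrightarrow> 0 \<le> L \<Longrightarrow>
       ennreal (c_alpha \<alpha> TYPE('n) * L * measure lebesgue A / measure lebesgue (ball (0::real^'n) 1))
         \<le> emeasure (nu_alpha_measure \<alpha>) A"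
    and emeasure_nu_alpha_le:
      "(\<And>z. z \<in> A \<Longrightarrow> (1 - norm z ^ 2) powr \<alpha> \<le> H) \<Longrightarrow> 0 \<le> H \<Longrightarrow>
       emeasure (nu_alpha_measure \<alpha>) A
         \<le> ennreal (c_alpha \<alpha> TYPE('n) * H * measure lebesgue A / measure lebesgue (ball (0::real^'n) 1))"
proof -
  let ?c = "c_alpha \<alpha> TYPE('n)"
  have c0: "0 \<le> ?c"
    by (rule c_alpha_nonneg)
  have An: "A \<in> sets nu_measure"
    using A by (simp add: nu_measure_def sets_restrict_space_iff)
  have const: "(\<integral>\<^sup>+ z. ennreal (?c * K) * indicator A z \<partial>nu_measure) =
      ennreal (?c * K * measure lebesgue A / measure lebesgue (ball (0::real^'n) 1))" if "0 \<le> K" for K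
    using An that c0
    by (simp add: nn_integral_cmult_indicator emeasure_nu_measure[OF A] ennreal_mult'[symmetric])
  show "ennreal (?c * L * measure lebesgue A / measure lebesgue (ball (0::real^'n) 1))
      \<le> emeasure (nu_alpha_measure \<alpha>) A"
    if "\<And>z. z \<in> A \<Longrightarrow> L \<le> (1 - norm z ^ 2) powr \<alpha>" "0 \<le> L"
    unfolding const[OF \<open>0 \<le> L\<close>, symmetric] emeasure_nu_alpha_measure[OF An] using that c0
    by (intro nn_integral_mono) (auto simp: indicator_def intro!: ennreal_leI mult_left_mono)
  show "emeasure (nu_alpha_measure \<alpha>) A
      \<le> ennreal (?c * H * measure lebesgue A / measure lebesgue (ball (0::real^'n) 1))"
    if "\<And>z. z \<in> A \<Longrightarrow> (1 - norm z ^ 2) powr \<alpha> \<le> H" "0 \<le> H"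
    unfolding const[OF \<open>0 \<le> H\<close>, symmetric] emeasure_nu_alpha_measure[OF An] using that c0
    by (intro nn_integral_mono) (auto simp: indicator_def intro!: ennreal_leI mult_left_mono)
qed

definition cone_factor :: "real \<Rightarrow> (real^'n::finite) set \<Rightarrow> real" where
  "cone_factor \<alpha> Q =
     c_alpha \<alpha> TYPE('n) * measure lebesgue (cone_shell Q 0 1) / measure lebesgue (ball (0::real^'n) 1)"

lemma cone_factor_nonneg: "0 \<le> cone_factor \<alpha> (Q :: (real^'n::finite) set)"
proof -
  have "0 \<le> c_alpha \<alpha> TYPE('n)"
    by (rule c_alpha_nonneg)
  then show ?thesis
    unfolding cone_factor_def by simp
qed

lemma one_minus_norm_sq_between:
  assumes "s \<le> norm z" "norm z < r" "r < 1" "1 - s \<le> 2 * (1 - r)"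
  shows "1 - r \<le> 1 - norm z ^ 2" "1 - norm z ^ 2 \<le> 4 * (1 - r)"
proof -
  have "1 - norm z ^ 2 = (1 - norm z) * (1 + norm z)"
    by (simp add: power2_eq_square algebra_simps)
  moreover have "1 - r \<le> 1 - norm z" "1 - norm z \<le> 2 * (1 - r)" "1 \<le> 1 + norm z" "1 + norm z \<le> 2"
    using assms by auto
  ultimately show "1 - r \<le> 1 - norm z ^ 2" "1 - norm z ^ 2 \<le> 4 * (1 - r)"
    using mult_mono[of "1 - norm z" "2 * (1 - r)" "1 + norm z" 2] mult_mono[of "1 - r" "1 - norm z" 1 "1 + norm z"]
    by auto
qed

lemma
  fixes Q :: "(real^'n::finite) set"
  assumes Q: "cone_shell Q 0 1 \<in> sets lebesgue"
    and sr: "0 \<le> s" "s \<le> r" "r < 1" "1 - s \<le> 2 * (1 - r)"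
  shows emeasure_nu_alpha_thin_cone_shell_ge:
      "ennreal (cone_factor \<alpha> Q * (4 powr - \<bar>\<alpha>\<bar> * (1 - r) powr \<alpha>) * (r ^ CARD('n) - s ^ CARD('n)))
         \<le> emeasure (nu_alpha_measure \<alpha>) (cone_shell Q s r)"
    and emeasure_nu_alpha_thin_cone_shell_le:
      "emeasure (nu_alpha_measure \<alpha>) (cone_shell Q s r)
         \<le> ennreal (cone_factor \<alpha> Q * (4 powr \<bar>\<alpha>\<bar> * (1 - r) powr \<alpha>) * (r ^ CARD('n) - s ^ CARD('n)))"
proof -
  let ?S = "cone_shell Q s r"
  have S: "?S \<in> sets lebesgue" "?S \<subseteq> ball 0 1"
    using sets_lebesgue_cone_shell[OF Q sr(1,2)] sr by (auto simp: cone_shell_def)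
  have weight: "4 powr - \<bar>\<alpha>\<bar> * (1 - r) powr \<alpha> \<le> (1 - norm z ^ 2) powr \<alpha>"
      "(1 - norm z ^ 2) powr \<alpha> \<le> 4 powr \<bar>\<alpha>\<bar> * (1 - r) powr \<alpha>" if "z \<in> ?S" for z
    using that sr one_minus_norm_sq_between[of s z r]
    by (auto simp: cone_shell_def intro!: powr_bounds_between)
  have eq: "c_alpha \<alpha> TYPE('n) * K * measure lebesgue ?S / measure lebesgue (ball (0::real^'n) 1) =
      cone_factor \<alpha> Q * K * (r ^ CARD('n) - s ^ CARD('n))" for K
    unfolding cone_factor_def measure_cone_shell[OF Q sr(1,2)] by simp
  show "ennreal (cone_factor \<alpha> Q * (4 powr - \<bar>\<alpha>\<bar> * (1 - r) powr \<alpha>) * (r ^ CARD('n) - s ^ CARD('n)))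
      \<le> emeasure (nu_alpha_measure \<alpha>) ?S"
    using emeasure_nu_alpha_ge[OF S weight(1)] unfolding eq by simp
  show "emeasure (nu_alpha_measure \<alpha>) ?S
      \<le> ennreal (cone_factor \<alpha> Q * (4 powr \<bar>\<alpha>\<bar> * (1 - r) powr \<alpha>) * (r ^ CARD('n) - s ^ CARD('n)))"
    using emeasure_nu_alpha_le[OF S weight(2)] unfolding eq by simp
qed

lemma cone_shell_subset_dyadic_shells:
  assumes "0 < u"
  shows "cone_shell Q (1 - u) 1 \<subseteq> (\<Union>j. cone_shell Q (1 - 2 * (u / 2 ^ Suc j)) (1 - u / 2 ^ Suc j))"
proof
  fix z assume z: "z \<in> cone_shell Q (1 - u) 1"
  then obtain j where "u / 2 ^ Suc j < 1 - norm z" "1 - norm z \<le> u / 2 ^ j"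
    using ex_dyadic_scale[of "1 - norm z" u] by (auto simp: cone_shell_def)
  then have "z \<in> cone_shell Q (1 - 2 * (u / 2 ^ Suc j)) (1 - u / 2 ^ Suc j)"
    using z by (auto simp: cone_shell_def)
  then show "z \<in> (\<Union>j. cone_shell Q (1 - 2 * (u / 2 ^ Suc j)) (1 - u / 2 ^ Suc j))"
    by blast
qed

lemma emeasure_nu_alpha_dyadic_cone_shell:
  fixes Q :: "(real^'n::finite) set"
  assumes Q: "cone_shell Q 0 1 \<in> sets lebesgue" and v: "0 < v" "v \<le> 1/2"
  shows "emeasure (nu_alpha_measure \<alpha>) (cone_shell Q (1 - 2 * v) (1 - v))
    \<le> ennreal (cone_factor \<alpha> Q * 4 powr \<bar>\<alpha>\<bar> * CARD('n) * v powr (1 + \<alpha>))"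
proof -
  let ?s = "1 - 2 * v" and ?r = "1 - v" and ?n = "CARD('n)"
  have \<kappa>: "0 \<le> cone_factor \<alpha> Q"
    by (rule cone_factor_nonneg)
  have sr: "0 \<le> ?s" "?s \<le> ?r" "?r < 1" "1 - ?s \<le> 2 * (1 - ?r)"
    using v by auto
  have "?r ^ ?n - ?s ^ ?n \<le> ?n * v"
    using power_diff_le_mult_diff[OF sr(1,2), of ?n] v by simp
  then have "cone_factor \<alpha> Q * (4 powr \<bar>\<alpha>\<bar> * v powr \<alpha>) * (?r ^ ?n - ?s ^ ?n)
      \<le> cone_factor \<alpha> Q * (4 powr \<bar>\<alpha>\<bar> * v powr \<alpha>) * (?n * v)"
    using \<kappa> by (intro mult_left_mono) auto
  also have "\<dots> = cone_factor \<alpha> Q * 4 powr \<bar>\<alpha>\<bar> * ?n * v powr (1 + \<alpha>)"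
    using v by (simp add: powr_add)
  finally have "ennreal (cone_factor \<alpha> Q * (4 powr \<bar>\<alpha>\<bar> * v powr \<alpha>) * (?r ^ ?n - ?s ^ ?n))
      \<le> ennreal (cone_factor \<alpha> Q * 4 powr \<bar>\<alpha>\<bar> * ?n * v powr (1 + \<alpha>))"
    by (rule ennreal_leI)
  with emeasure_nu_alpha_thin_cone_shell_le[OF Q sr, of \<alpha>] show ?thesis
    by simp
qed

lemma emeasure_nu_alpha_cone_shell_layer:
  fixes Q :: "(real^'n::finite) set"
  assumes Q: "cone_shell Q 0 1 \<in> sets lebesgue" and \<alpha>: "-1 < \<alpha>" and u: "0 < u" "u \<le> 1"
  shows "emeasure (nu_alpha_measure \<alpha>) (cone_shell Q (1 - u) 1)
    \<le> ennreal (cone_factor \<alpha> Q * (4 powr \<bar>\<alpha>\<bar> * CARD('n) / (2 powr (1 + \<alpha>) - 1)) * u powr (1 + \<alpha>))"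
proof -
  let ?M = "nu_alpha_measure \<alpha> :: (real^'n) measure"
  let ?P = "\<lambda>j. cone_shell Q (1 - 2 * (u / 2 ^ Suc j)) (1 - u / 2 ^ Suc j)"
  define \<rho> where "\<rho> = 2 powr - (1 + \<alpha>)"
  define G where "G = cone_factor \<alpha> Q * 4 powr \<bar>\<alpha>\<bar> * CARD('n) * (u / 2) powr (1 + \<alpha>)"
  have \<rho>: "0 \<le> \<rho>" "\<rho> < 1"
    unfolding \<rho>_def using \<alpha> by (auto intro: powr_less_one)
  have G: "0 \<le> G"
    unfolding G_def using cone_factor_nonneg[of \<alpha> Q] by simp
  have v: "0 < u / 2 ^ Suc j" "u / 2 ^ Suc j \<le> 1/2" for j
    using u by (auto simp: field_simps order_trans[OF _ one_le_power])
  have P: "emeasure ?M (?P j) \<le> ennreal (G * \<rho> ^ j)" for j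
    using emeasure_nu_alpha_dyadic_cone_shell[OF Q v[of j], of \<alpha>]
    unfolding G_def \<rho>_def dyadic_powr by (simp add: mult_ac)
  have sets: "?P j \<in> sets ?M" for j
    using sets_lebesgue_cone_shell[OF Q, of "1 - 2 * (u / 2 ^ Suc j)" "1 - u / 2 ^ Suc j"] v[of j]
    by (auto simp: sets_nu_alpha_measure cone_shell_def)
  have "emeasure ?M (cone_shell Q (1 - u) 1) \<le> emeasure ?M (\<Union>j. ?P j)"
    using sets cone_shell_subset_dyadic_shells[OF u(1)] by (intro emeasure_mono) auto
  also have "\<dots> \<le> (\<Sum>j. emeasure ?M (?P j))"
    using sets by (intro emeasure_subadditive_countably) auto
  also have "\<dots> \<le> (\<Sum>j. ennreal (G * \<rho> ^ j))"
    by (intro suminf_le P summableI)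
  also have "\<dots> = ennreal (G / (1 - \<rho>))"
    using G \<rho> sums_mult[OF geometric_sums[of \<rho>], of G] by (intro suminf_ennreal_eq) auto
  also have "G / (1 - \<rho>) = cone_factor \<alpha> Q * (4 powr \<bar>\<alpha>\<bar> * CARD('n) / (2 powr (1 + \<alpha>) - 1)) * u powr (1 + \<alpha>)"
  proof -
    have "1 < 2 powr (1 + \<alpha>)"
      using \<alpha> by simp
    moreover have "2 powr (1 + \<alpha>) * 2 powr (- 1 - \<alpha>) = 1"
      by (simp flip: powr_add)
    ultimately show ?thesis
      unfolding G_def \<rho>_def using u by (simp add: powr_divide powr_minus field_simps)
  qed
  finally show ?thesis .
qed

lemma emeasure_nu_alpha_cone_shell_inner:
  fixes Q :: "(real^'n::finite) set"
  assumes Q: "cone_shell Q 0 1 \<in> sets lebesgue" and u: "0 < u" "u \<le> 4/5"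
  shows "ennreal (cone_factor \<alpha> Q * (4 powr - \<bar>\<alpha>\<bar> / 8 * (1/10) ^ (CARD('n) - 1)) * u powr (1 + \<alpha>))
    \<le> emeasure (nu_alpha_measure \<alpha>) (cone_shell Q (1 - 9/8 * u) (1 - u))"
proof -
  let ?s = "1 - 9/8 * u" and ?r = "1 - u" and ?n = "CARD('n)"
  have \<kappa>: "0 \<le> cone_factor \<alpha> Q"
    by (rule cone_factor_nonneg)
  have sr: "0 \<le> ?s" "?s \<le> ?r" "?r < 1" "1 - ?s \<le> 2 * (1 - ?r)"
    using u by auto
  have "(1/10) ^ (?n - 1) \<le> ?s ^ (?n - 1)"
    using u by (intro power_mono) auto
  then have "u / 8 * (1/10) ^ (?n - 1) \<le> (?r - ?s) * ?s ^ (?n - 1)"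
    using u by simp
  also have "\<dots> \<le> ?r ^ ?n - ?s ^ ?n"
    using sr by (intro mult_power_le_power_diff) auto
  finally have diff: "u / 8 * (1/10) ^ (?n - 1) \<le> ?r ^ ?n - ?s ^ ?n" .
  have "cone_factor \<alpha> Q * (4 powr - \<bar>\<alpha>\<bar> / 8 * (1/10) ^ (?n - 1)) * u powr (1 + \<alpha>) =
      cone_factor \<alpha> Q * (4 powr - \<bar>\<alpha>\<bar> * u powr \<alpha>) * (u / 8 * (1/10) ^ (?n - 1))"
    using u by (simp add: powr_add)
  also have "\<dots> \<le> cone_factor \<alpha> Q * (4 powr - \<bar>\<alpha>\<bar> * u powr \<alpha>) * (?r ^ ?n - ?s ^ ?n)"
    using \<kappa> diff by (intro mult_left_mono) auto
  finally have "ennreal (cone_factor \<alpha> Q * (4 powr - \<bar>\<alpha>\<bar> / 8 * (1/10) ^ (?n - 1)) * u powr (1 + \<alpha>))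
      \<le> ennreal (cone_factor \<alpha> Q * (4 powr - \<bar>\<alpha>\<bar> * u powr \<alpha>) * (?r ^ ?n - ?s ^ ?n))"
    by (rule ennreal_leI)
  also have "\<dots> \<le> emeasure (nu_alpha_measure \<alpha>) (cone_shell Q ?s ?r)"
    using emeasure_nu_alpha_thin_cone_shell_ge[OF Q sr, of \<alpha>] by simp
  finally show ?thesis .
qed

lemma tent_eq:
  fixes Q :: "(real^'n::finite) set"
  shows "tent Q e = {z. sgn z \<in> Q \<and> 1 - e / 2 * diam_rho Q < norm z \<and> norm z < 1}"
proof -
  have "(1 / norm z) *\<^sub>R z = sgn z" for z :: "real^'n"
    by (simp add: sgn_div_norm divide_inverse)
  then show ?thesis
    unfolding tent_def by auto
qed

lemma diam_rho_le_pi: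
  fixes Q :: "(real^'n::finite) set"
  assumes "Q \<subseteq> sphere 0 1" "Q \<noteq> {}"
  shows "diam_rho Q \<le> pi"
  unfolding diam_rho_def
proof (rule cSup_least)
  show "{rho x y |x y. x \<in> Q \<and> y \<in> Q} \<noteq> {}"
    using assms(2) by blast
  fix t assume "t \<in> {rho x y |x y. x \<in> Q \<and> y \<in> Q}"
  then obtain x y where t: "t = rho x y" "x \<in> Q" "y \<in> Q"
    by blast
  have "norm x = 1" "norm y = 1"
    using t assms(1) by auto
  then have "\<bar>x \<bullet> y\<bar> \<le> 1"
    using Cauchy_Schwarz_ineq2[of x y] by simp
  then show "t \<le> pi"
    unfolding t rho_def by (intro arccos_ubound) auto
qed

definition layer_ratio :: "real \<Rightarrow> nat \<Rightarrow> real" where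
  "layer_ratio \<alpha> n =
     (4 powr \<bar>\<alpha>\<bar> * n / (2 powr (1 + \<alpha>) - 1)) / (4 powr - \<bar>\<alpha>\<bar> / 8 * (1/10) ^ (n - 1))"

lemma layer_ratio_nonneg:
  assumes "-1 < \<alpha>"
  shows "0 \<le> layer_ratio \<alpha> n"
proof -
  have "1 < 2 powr (1 + \<alpha>)"
    using assms by simp
  then show ?thesis
    unfolding layer_ratio_def by simp
qed

lemma emeasure_nu_alpha_layer_le_inner:
  fixes Q :: "(real^'n::finite) set"
  assumes Q: "cone_shell Q 0 1 \<in> sets lebesgue" and \<alpha>: "-1 < \<alpha>" and u: "0 < u" "u \<le> 4/5"
  shows "emeasure (nu_alpha_measure \<alpha>) (cone_shell Q (1 - u) 1)
    \<le> ennreal (layer_ratio \<alpha> CARD('n)) * emeasure (nu_alpha_measure \<alpha>) (cone_shell Q (1 - 9/8 * u) (1 - u))"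
proof -
  let ?A = "4 powr \<bar>\<alpha>\<bar> * CARD('n) / (2 powr (1 + \<alpha>) - 1)"
  let ?B = "4 powr - \<bar>\<alpha>\<bar> / 8 * (1/10) ^ (CARD('n) - 1)"
  have cancel: "k * a * v = a / b * (k * b * v)" if "b \<noteq> 0" for k a b v :: real
    using that by simp
  have "?B \<noteq> 0"
    by simp
  then have ratio: "cone_factor \<alpha> Q * ?A * u powr (1 + \<alpha>) =
      layer_ratio \<alpha> CARD('n) * (cone_factor \<alpha> Q * ?B * u powr (1 + \<alpha>))"
    unfolding layer_ratio_def by (rule cancel)
  have "emeasure (nu_alpha_measure \<alpha>) (cone_shell Q (1 - u) 1)
      \<le> ennreal (cone_factor \<alpha> Q * ?A * u powr (1 + \<alpha>))"
    using emeasure_nu_alpha_cone_shell_layer[OF Q \<alpha>] u by simp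
  also have "\<dots> = ennreal (layer_ratio \<alpha> CARD('n)) * ennreal (cone_factor \<alpha> Q * ?B * u powr (1 + \<alpha>))"
    unfolding ratio using layer_ratio_nonneg[OF \<alpha>] by (rule ennreal_mult')
  also have "\<dots> \<le> ennreal (layer_ratio \<alpha> CARD('n)) * emeasure (nu_alpha_measure \<alpha>) (cone_shell Q (1 - 9/8 * u) (1 - u))"
    using emeasure_nu_alpha_cone_shell_inner[OF Q u] by (rule mult_left_mono) simp
  finally show ?thesis .
qed

lemma emeasure_tent_le:
  fixes Q :: "(real^'n::finite) set"
  assumes \<alpha>: "-1 < \<alpha>" and T: "tent Q 1 \<in> sets (nu_alpha_measure \<alpha>)"
    and d: "0 < diam_rho Q" "diam_rho Q \<le> 16/5"
  shows "emeasure (nu_alpha_measure \<alpha>) (tent Q 1)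
    \<le> ennreal (1 + layer_ratio \<alpha> CARD('n)) * emeasure (nu_alpha_measure \<alpha>) (tent Q 1 - tent Q (1/2))"
proof -
  let ?M = "nu_alpha_measure \<alpha> :: (real^'n) measure"
  let ?T = "tent Q 1" and ?D = "tent Q 1 - tent Q (1/2)"
  define u where "u = diam_rho Q / 4"
  let ?L = "cone_shell Q (1 - u) 1"
  have u: "0 < u" "u \<le> 4/5"
    using d by (auto simp: u_def)
  have layer: "?L = ?T \<inter> {z. 1 - u \<le> norm z}"
    and D: "?D = ?T \<inter> {z. norm z \<le> 1 - u}"
    and inner: "cone_shell Q (1 - 9/8 * u) (1 - u) \<subseteq> ?D"
    using u by (auto simp: tent_eq cone_shell_def u_def)
  have "{z::real^'n. 1 - u \<le> norm z} \<in> sets borel" "{z::real^'n. norm z \<le> 1 - u} \<in> sets borel"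
    by measurable
  then have L_sets: "?L \<in> sets ?M" and D_sets: "?D \<in> sets ?M"
    unfolding layer D using T by (auto simp: sets_nu_alpha_measure intro: sets_lebesgue_borel)
  have Q: "cone_shell Q 0 1 \<in> sets lebesgue"
    using L_sets u by (intro sets_lebesgue_cone_shell_0_1[of "1 - u"]) (auto simp: sets_nu_alpha_measure)
  have "emeasure ?M ?L \<le> ennreal (layer_ratio \<alpha> CARD('n)) * emeasure ?M (cone_shell Q (1 - 9/8 * u) (1 - u))"
    by (rule emeasure_nu_alpha_layer_le_inner[OF Q \<alpha> u])
  also have "\<dots> \<le> ennreal (layer_ratio \<alpha> CARD('n)) * emeasure ?M ?D"
    by (intro mult_left_mono emeasure_mono[OF inner D_sets]) simp
  finally have L_le: "emeasure ?M ?L \<le> ennreal (layer_ratio \<alpha> CARD('n)) * emeasure ?M ?D" .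
  have "?T = ?D \<union> ?L"
    using layer D by auto
  then have "emeasure ?M ?T = emeasure ?M (?D \<union> ?L)"
    by (rule arg_cong)
  also have "\<dots> \<le> emeasure ?M ?D + emeasure ?M ?L"
    by (rule emeasure_subadditive[OF D_sets L_sets])
  also have "\<dots> \<le> emeasure ?M ?D + ennreal (layer_ratio \<alpha> CARD('n)) * emeasure ?M ?D"
    using L_le by (rule add_left_mono)
  also have "\<dots> = ennreal (1 + layer_ratio \<alpha> CARD('n)) * emeasure ?M ?D"
    using layer_ratio_nonneg[OF \<alpha>] by (simp add: distrib_right)
  finally show ?thesis .
qed

lemma nu_alpha_tent_le:
  fixes Q :: "(real^'n::finite) set"
  assumes Q: "Q \<subseteq> sphere 0 1" and \<alpha>: "-1 < \<alpha>"
  shows "nu_alpha \<alpha> (tent Q 1) \<le> (1 + layer_ratio \<alpha> CARD('n)) * nu_alpha \<alpha> (tent Q 1 - tent Q (1/2))"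
proof (cases "tent Q 1 \<in> sets (nu_alpha_measure \<alpha>) \<and> tent Q 1 \<noteq> {}")
  case False
  \<comment> \<open>\<open>measure\<close> is \<open>0\<close> on non-measurable sets\<close>
  then have "nu_alpha \<alpha> (tent Q 1) = 0"
    by (auto simp: nu_alpha_def measure_notin_sets)
  then show ?thesis
    using layer_ratio_nonneg[OF \<alpha>] by (simp add: nu_alpha_def)
next
  case True
  then obtain z where "z \<in> tent Q 1"
    by blast
  then have "Q \<noteq> {}" "0 < diam_rho Q"
    by (auto simp: tent_eq)
  then have "diam_rho Q \<le> 16/5"
    using diam_rho_le_pi[OF Q] pi_approx by simp
  then show ?thesis
    unfolding nu_alpha_def
    using True layer_ratio_nonneg[OF \<alpha>] emeasure_tent_le[OF \<alpha>] \<open>0 < diam_rho Q\<close>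
    by (intro measure_le_mult_measure) auto
qed

theorem lemma2p6:
  fixes \<alpha> :: real
  assumes "CARD('n::finite) \<ge> 3" and "-1 < \<alpha>"
  shows "\<exists>C4::real. \<forall>(N::nat) (Ms :: nat \<Rightarrow> nat \<Rightarrow> nat) (Ds :: nat \<Rightarrow> nat \<Rightarrow> nat \<Rightarrow> (real^'n) set).
           (\<forall>t\<in>{1..N}. dyadic_system (Ms t) (Ds t) \<and>
                         dyadic_associated (Ms t) (Ds t) (1/96) (1/12) 4) \<longrightarrow>
           (\<forall>t\<in>{1..N}. \<forall>Q\<in>cubes (Ms t) (Ds t).
              nu_alpha \<alpha> (tent Q 1) \<le> C4 * nu_alpha \<alpha> (tent Q 1 - tent Q (1/2)))"
proof (intro exI[of _ "(1 + layer_ratio \<alpha> CARD('n))"] allI impI ballI)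
  fix N Ms and Ds :: "nat \<Rightarrow> nat \<Rightarrow> nat \<Rightarrow> (real^'n) set" and t Q
  assume "\<forall>t\<in>{1..N}. dyadic_system (Ms t) (Ds t) \<and> dyadic_associated (Ms t) (Ds t) (1/96) (1/12) 4"
    and "t \<in> {1..N}" and "Q \<in> cubes (Ms t) (Ds t)"
  then have "Q \<subseteq> sphere 0 1"
    unfolding cubes_def dyadic_system_def by blast
  then show "nu_alpha \<alpha> (tent Q 1) \<le> (1 + layer_ratio \<alpha> CARD('n)) * nu_alpha \<alpha> (tent Q 1 - tent Q (1/2))"
    using nu_alpha_tent_le assms(2) by blast
qed

end
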